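(* Admissible semantics (the map $F\mapsto \mathrm{adm}(F)$, the set of admissible sets of $F$) is serialisable with the selection function $\alpha_{adm}(X,Y,Z)=X\cup Y\cup Z$ and the termination function $\beta_{adm}(F,S)=1$ for all $F,S$.
   Context: An abstract argumentation framework (AF) is a pair $F=(A,R)$ with $A$ a finite subset of a fixed universal set of arguments $\mathfrak{A}$ and $R\subseteq A\times A$ ($a\to b$ means $(a,b)\in R$). For $S\subseteq A$: $S^+=\{a\mid \exists b\in S: b\to a\}$, $S^-=\{a\mid\exists b\in S: a\to b\}$; for sets $S,S'$, $S\to S'$ means $S^+\cap S'\neq\emptyset$. $S$ is conflict-free if no $a,b\in S$ with $a\to b$; $S$ defends $b$ if every attacker of $b$ is attacked by some element of $S$; $S$ is admissible if conflict-free and defends all its elements. An initial set is a non-empty admissible set with no non-empty admissible proper subset; $\mathrm{IS}(F)$ is the set of initial sets. An initial set $S$ is unattacked if $S^-=\emptyset$; unchallenged if $S^-\neq\emptyset$ and no $S'\in\mathrm{IS}(F)$ has $S'\to S$; challenged if some $S'\in\mathrm{IS}(F)$ has $S'\to S$. Write $\mathrm{IS}^{u}(F),\mathrm{IS}^{uc}(F),\mathrm{IS}^{c}(F)$ for the sets of unattacked, unchallenged, challenged initial sets. The reduct is $F^S=(A',R\cap(A'\times A'))$ with $A'=A\setminus(S\cup S^+)$. A selection function $\alpha$ maps any three sets $X,Y,Z$ of sets of arguments to a subset $\alpha(X,Y,Z)\subseteq X\cup Y\cup Z$. A termination function $\beta$ maps pairs $(F,S)$ (AF, set of arguments) to $\{0,1\}$.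 A state is a pair $(F,S)$; there is a transition $(F,S)\to(F^{S'},S\cup S')$ whenever $S'\in\alpha(\mathrm{IS}^u(F),\mathrm{IS}^{uc}(F),\mathrm{IS}^c(F))$. Write $(F,S)\leadsto^{\alpha}(F',S')$ if $(F',S')$ is reachable in finitely many (possibly zero) transitions, and $(F,S)\leadsto^{\alpha,\beta}(F',S')$ if moreover $\beta(F',S')=1$. Let $\mathcal{E}^{\alpha,\beta}(F)$ be the set of all $S$ with $(F,\emptyset)\leadsto^{\alpha,\beta}(F',S)$ for some $F'$. A semantics $\sigma$ (assigning to each AF a set $\sigma(F)$ of sets of arguments) is serialisable with $\alpha,\beta$ if $\sigma(F)=\mathcal{E}^{\alpha,\beta}(F)$ for all AFs $F$. *)

theory Defs
  imports Main
begin

type_synonym 'a af = "'a set \<times> ('a \<times> 'a) set"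

definition is_af :: "'a af \<Rightarrow> bool" where
  "is_af F \<longleftrightarrow> finite (fst F) \<and> snd F \<subseteq> fst F \<times> fst F"

definition splus :: "'a af \<Rightarrow> 'a set \<Rightarrow> 'a set" where
  "splus F S = {a. \<exists>b\<in>S. (b, a) \<in> snd F}"

definition sminus :: "'a af \<Rightarrow> 'a set \<Rightarrow> 'a set" where
  "sminus F S = {a. \<exists>b\<in>S. (a, b) \<in> snd F}"

definition set_attacks :: "'a af \<Rightarrow> 'a set \<Rightarrow> 'a set \<Rightarrow> bool" where
  "set_attacks F S S' \<longleftrightarrow> splus F S \<inter> S' \<noteq> {}"

definition conflict_free :: "'a af \<Rightarrow> 'a set \<Rightarrow> bool" where
  "conflict_free F S \<longleftrightarrow> \<not> (\<exists>a\<in>S. \<exists>b\<in>S. (a, b) \<in> snd F)"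

definition defends :: "'a af \<Rightarrow> 'a set \<Rightarrow> 'a \<Rightarrow> bool" where
  "defends F S b \<longleftrightarrow> (\<forall>a. (a, b) \<in> snd F \<longrightarrow> (\<exists>c\<in>S. (c, a) \<in> snd F))"

definition admissible :: "'a af \<Rightarrow> 'a set \<Rightarrow> bool" where
  "admissible F S \<longleftrightarrow> S \<subseteq> fst F \<and> conflict_free F S \<and> (\<forall>b\<in>S. defends F S b)"

definition adm :: "'a af \<Rightarrow> 'a set set" where
  "adm F = {S. admissible F S}"

definition IS :: "'a af \<Rightarrow> 'a set set" where
  "IS F = {S. S \<noteq> {} \<and> admissible F S \<and> \<not> (\<exists>S'. S' \<subset> S \<and> S' \<noteq> {} \<and> admissible F S')}"

definition IS_u :: "'a af \<Rightarrow> 'a set set" where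
  "IS_u F = {S \<in> IS F. sminus F S = {}}"

definition IS_uc :: "'a af \<Rightarrow> 'a set set" where
  "IS_uc F = {S \<in> IS F. sminus F S \<noteq> {} \<and> \<not> (\<exists>S'\<in>IS F. set_attacks F S' S)}"

definition IS_c :: "'a af \<Rightarrow> 'a set set" where
  "IS_c F = {S \<in> IS F. \<exists>S'\<in>IS F. set_attacks F S' S}"

definition reduct :: "'a af \<Rightarrow> 'a set \<Rightarrow> 'a af" where
  "reduct F S = (let A' = fst F - (S \<union> splus F S) in (A', snd F \<inter> (A' \<times> A')))"

text \<open>Selection functions: 'a set set => 'a set set => 'a set set => 'a set set;
  termination functions: 'a af => 'a set => bool (True = 1).\<close>

definition transition ::
  "('a set set \<Rightarrow> 'a set set \<Rightarrow> 'a set set \<Rightarrow> 'a set set)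
   \<Rightarrow> ('a af \<times> 'a set) \<Rightarrow> ('a af \<times> 'a set) \<Rightarrow> bool" where
  "transition \<alpha> st st' \<longleftrightarrow>
     (\<exists>S'\<in>\<alpha> (IS_u (fst st)) (IS_uc (fst st)) (IS_c (fst st)).
        st' = (reduct (fst st) S', snd st \<union> S'))"

definition reaches ::
  "('a set set \<Rightarrow> 'a set set \<Rightarrow> 'a set set \<Rightarrow> 'a set set)
   \<Rightarrow> ('a af \<times> 'a set) \<Rightarrow> ('a af \<times> 'a set) \<Rightarrow> bool" where
  "reaches \<alpha> = (transition \<alpha>)\<^sup>*\<^sup>*"

definition serial_ext ::
  "('a set set \<Rightarrow> 'a set set \<Rightarrow> 'a set set \<Rightarrow> 'a set set)
   \<Rightarrow> ('a af \<Rightarrow> 'a set \<Rightarrow> bool) \<Rightarrow> 'a af \<Rightarrow> 'a set set" where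
  "serial_ext \<alpha> \<beta> F = {S. \<exists>F'. reaches \<alpha> (F, {}) (F', S) \<and> \<beta> F' S}"

definition serialisable ::
  "('a af \<Rightarrow> 'a set set)
   \<Rightarrow> ('a set set \<Rightarrow> 'a set set \<Rightarrow> 'a set set \<Rightarrow> 'a set set)
   \<Rightarrow> ('a af \<Rightarrow> 'a set \<Rightarrow> bool) \<Rightarrow> bool" where
  "serialisable \<sigma> \<alpha> \<beta> \<longleftrightarrow> (\<forall>F. is_af F \<longrightarrow> \<sigma> F = serial_ext \<alpha> \<beta> F)"

definition alpha_adm :: "'a set set \<Rightarrow> 'a set set \<Rightarrow> 'a set set \<Rightarrow> 'a set set" where
  "alpha_adm X Y Z = X \<union> Y \<union> Z"

definition beta_adm :: "'a af \<Rightarrow> 'a set \<Rightarrow> bool" where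
  "beta_adm F S = True"

end

theory Submission
  imports Defs
begin

text \<open>Along any run from the empty set, the current framework is the reduct F^S by the set S
  accepted so far, and S stays admissible: if S' is admissible in F^S then so is S \<union> S' in F,
  since S' avoids S^+ (hence is not attacked by S, nor attacks the self-defending S), and an
  attacker of S' either lies in S^+ or belongs to F^S, where S' counters it.  Conversely, a
  non-empty admissible S contains an initial set I (a minimal non-empty admissible subset), and
  S - I is admissible in F^I; as S is finite, peeling off initial sets in this way exhausts S.\<close>

lemma fst_reduct [simp]: "fst (reduct F S) = fst F - (S \<union> splus F S)"
  by (simp add: reduct_def Let_def)

lemma snd_reduct [simp]: "snd (reduct F S) = snd F \<inter> (fst (reduct F S) \<times> fst (reduct F S))"
  by (simp add: reduct_def Let_def)

lemma reduct_empty: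
  assumes "is_af F" shows "reduct F {} = F"
proof (rule prod_eqI)
  show fst_eq: "fst (reduct F {}) = fst F"
    by (simp add: splus_def)
  show "snd (reduct F {}) = snd F"
    using assms by (auto simp: fst_eq is_af_def simp del: fst_reduct)
qed

lemma is_af_reduct: "is_af F \<Longrightarrow> is_af (reduct F S)"
  by (auto simp: is_af_def)

lemma splus_reduct:
  assumes "S' \<subseteq> fst (reduct F S)"
  shows "splus (reduct F S) S' = splus F S' \<inter> fst (reduct F S)"
  using assms unfolding splus_def snd_reduct by blast

lemma reduct_reduct:
  assumes "S' \<subseteq> fst (reduct F S)"
  shows "reduct (reduct F S) S' = reduct F (S \<union> S')"
proof (rule prod_eqI)
  show fst_eq: "fst (reduct (reduct F S) S') = fst (reduct F (S \<union> S'))"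
    using splus_reduct[OF assms] unfolding fst_reduct splus_def by blast
  define A' where "A' = fst (reduct F S)"
  define A'' where "A'' = fst (reduct F (S \<union> S'))"
  have "A'' \<subseteq> A'"
    unfolding A'_def A''_def by (auto simp: splus_def)
  have "snd (reduct (reduct F S) S') = snd F \<inter> (A' \<times> A') \<inter> (A'' \<times> A'')"
    unfolding A'_def A''_def by (simp only: snd_reduct fst_eq)
  also have "\<dots> = snd (reduct F (S \<union> S'))"
    using \<open>A'' \<subseteq> A'\<close> unfolding A''_def[symmetric] snd_reduct by auto
  finally show "snd (reduct (reduct F S) S') = snd (reduct F (S \<union> S'))" .
qed

lemma admissible_Un_reduct:
  assumes "is_af F" and "admissible F S" and "admissible (reduct F S) S'"
  shows "admissible F (S \<union> S')"
proof -
  from assms(2) have cf: "conflict_free F S" and def: "\<forall>b\<in>S. defends F S b"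
    by (simp_all add: admissible_def)
  from assms(3) have S': "S' \<subseteq> fst F - (S \<union> splus F S)"
    and cf': "conflict_free (reduct F S) S'" and def': "\<forall>b\<in>S'. defends (reduct F S) S' b"
    by (simp_all add: admissible_def)
  have "(a, b) \<notin> snd F" if ab_in: "a \<in> S \<union> S'" "b \<in> S \<union> S'" for a b
  proof
    assume ab: "(a, b) \<in> snd F"
    consider "a \<in> S" "b \<in> S" | "a \<in> S" "b \<in> S'" | "a \<in> S'" "b \<in> S" | "a \<in> S'" "b \<in> S'"
      using ab_in by blast
    then show False
    proof cases
      case 1
      then show False using cf ab by (auto simp: conflict_free_def)
    next
      case 2
      then show False using S' ab by (auto simp: splus_def)
    next
      case 3
      then obtain c where "c \<in> S" "(c, a) \<in> snd F"
        using def ab by (auto simp: defends_def)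
      then show False using S' \<open>a \<in> S'\<close> by (auto simp: splus_def)
    next
      case 4
      then show False using cf' S' ab by (auto simp: conflict_free_def)
    qed
  qed
  moreover have "defends F (S \<union> S') b" if b_in: "b \<in> S'" for b
    unfolding defends_def
  proof (intro allI impI)
    fix a
    assume ab: "(a, b) \<in> snd F"
    show "\<exists>c\<in>S \<union> S'. (c, a) \<in> snd F"
    proof (cases "a \<in> splus F S")
      case False
      have "a \<notin> S"
        using S' b_in ab by (auto simp: splus_def)
      moreover have "a \<in> fst F"
        using assms(1) ab by (auto simp: is_af_def)
      ultimately have "(a, b) \<in> snd (reduct F S)"
        using False S' b_in ab by auto
      then obtain c where "c \<in> S'" "(c, a) \<in> snd (reduct F S)"
        using def' b_in by (auto simp: defends_def)
      then show ?thesis by auto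
    qed (auto simp: splus_def)
  qed
  moreover have "defends F (S \<union> S') b" if "b \<in> S" for b
    using def that by (auto simp: defends_def)
  ultimately show ?thesis
    using S' assms(2) unfolding admissible_def conflict_free_def by blast
qed

lemma admissible_reduct_Diff:
  assumes "admissible F S" and "I \<subseteq> S"
  shows "admissible (reduct F I) (S - I)"
proof -
  from assms(1) have cf: "\<And>a b. a \<in> S \<Longrightarrow> b \<in> S \<Longrightarrow> (a, b) \<notin> snd F"
    and def: "\<forall>b\<in>S. defends F S b"
    by (auto simp: admissible_def conflict_free_def)
  have sub: "S - I \<subseteq> fst (reduct F I)"
    using assms cf by (auto simp: admissible_def splus_def)
  moreover have "conflict_free (reduct F I) (S - I)"
    using cf by (auto simp: conflict_free_def)
  moreover have "defends (reduct F I) (S - I) b" if b_in: "b \<in> S - I" for b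
    unfolding defends_def
  proof (intro allI impI)
    fix a
    assume "(a, b) \<in> snd (reduct F I)"
    then have a: "a \<in> fst (reduct F I)" "(a, b) \<in> snd F"
      by auto
    then obtain c where c: "c \<in> S" "(c, a) \<in> snd F"
      using def b_in by (auto simp: defends_def)
    moreover have "c \<notin> I"
      using a c by (auto simp: splus_def)
    ultimately show "\<exists>c\<in>S - I. (c, a) \<in> snd (reduct F I)"
      using sub a by auto
  qed
  ultimately show ?thesis
    by (simp add: admissible_def)
qed

lemma admissible_contains_IS:
  assumes "finite S" "admissible F S" "S \<noteq> {}"
  shows "\<exists>I\<in>IS F. I \<subseteq> S"
  using assms
proof (induction rule: finite_psubset_induct)
  case (psubset S)
  show ?case
  proof (cases "S \<in> IS F")
    case False
    then obtain S' where "S' \<subset> S" "admissible F S'" "S' \<noteq> {}"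
      using psubset.prems by (auto simp: IS_def)
    with psubset.IH obtain I where "I \<in> IS F" "I \<subseteq> S'"
      by blast
    with \<open>S' \<subset> S\<close> show ?thesis
      by blast
  qed blast
qed

lemma alpha_adm_IS: "alpha_adm (IS_u F) (IS_uc F) (IS_c F) = IS F"
  unfolding alpha_adm_def IS_u_def IS_uc_def IS_c_def by blast

lemma transition_alpha_adm_iff:
  "transition alpha_adm (F, S) st' \<longleftrightarrow> (\<exists>I\<in>IS F. st' = (reduct F I, S \<union> I))"
  unfolding transition_def alpha_adm_IS by simp

lemma reaches_alpha_adm_imp_admissible:
  assumes "reaches alpha_adm (F, {}) (G, S)" and "is_af F"
  shows "admissible F S \<and> G = reduct F S"
  using assms(1) unfolding reaches_def
proof (induction rule: rtranclp_induct2)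
  case refl
  show ?case
    using reduct_empty[OF assms(2)] by (simp add: admissible_def conflict_free_def)
next
  case (step G S G' S')
  then obtain I where I: "I \<in> IS G" and st': "(G', S') = (reduct G I, S \<union> I)"
    by (auto simp: transition_alpha_adm_iff)
  then have "admissible G I"
    by (simp add: IS_def)
  with step.IH have "admissible F (S \<union> I)" and "I \<subseteq> fst (reduct F S)"
    using admissible_Un_reduct[OF assms(2)] by (auto simp: admissible_def)
  then show ?case
    using st' step.IH reduct_reduct[of I F S] by auto
qed

lemma admissible_imp_reaches_alpha_adm:
  assumes "is_af G" and "admissible G S"
  shows "\<exists>G'. reaches alpha_adm (G, T) (G', T \<union> S)"
proof -
  have "finite S"
    using assms finite_subset by (auto simp: is_af_def admissible_def)
  then show ?thesis
    using assms
  proof (induction arbitrary: G T rule: finite_psubset_induct)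
    case (psubset S)
    show ?case
    proof (cases "S = {}")
      case True
      then show ?thesis
        unfolding reaches_def by (metis sup_bot.right_neutral rtranclp.rtrancl_refl)
    next
      case False
      then obtain I where I: "I \<in> IS G" "I \<subseteq> S"
        using admissible_contains_IS[OF psubset.hyps psubset.prems(2) False] by blast
      then have "S - I \<subset> S"
        by (auto simp: IS_def)
      moreover have "admissible (reduct G I) (S - I)"
        using admissible_reduct_Diff psubset.prems(2) I(2) .
      ultimately obtain G' where "reaches alpha_adm (reduct G I, T \<union> I) (G', T \<union> I \<union> (S - I))"
        using psubset.IH[OF _ is_af_reduct[OF psubset.prems(1)]] by blast
      moreover have "T \<union> I \<union> (S - I) = T \<union> S"
        using I(2) by blast
      moreover have "transition alpha_adm (G, T) (reduct G I, T \<union> I)"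
        using I(1) by (auto simp: transition_alpha_adm_iff)
      ultimately have "reaches alpha_adm (G, T) (G', T \<union> S)"
        unfolding reaches_def using converse_rtranclp_into_rtranclp by fastforce
      then show ?thesis ..
    qed
  qed
qed

lemma admissible_iff_reaches_alpha_adm:
  assumes "is_af F"
  shows "admissible F S \<longleftrightarrow> (\<exists>G. reaches alpha_adm (F, {}) (G, S))"
proof
  assume "admissible F S"
  then show "\<exists>G. reaches alpha_adm (F, {}) (G, S)"
    using admissible_imp_reaches_alpha_adm[OF assms, of S "{}"] by simp
next
  assume "\<exists>G. reaches alpha_adm (F, {}) (G, S)"
  then show "admissible F S"
    using reaches_alpha_adm_imp_admissible assms by blast
qed

theorem theorem2:
  shows "serialisable (adm :: 'a af \<Rightarrow> 'a set set) alpha_adm beta_adm"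
  unfolding serialisable_def
proof (intro allI impI)
  fix F :: "'a af"
  assume "is_af F"
  then show "adm F = serial_ext alpha_adm beta_adm F"
    by (auto simp: adm_def serial_ext_def beta_adm_def admissible_iff_reaches_alpha_adm)
qed

end
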